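(* If $\Gamma ; \Delta \vdash \mathcal{C}$ in $\lambda_{\mathrm{act}}$ and $\mathcal{C} \equiv \mathcal{D}$, then $[\![\mathcal{C}]\!] \equiv [\![\mathcal{D}]\!]$ in $\lambda_{\mathrm{ch}}$.
   Context: $\lambda_{\mathrm{act}}$: types $A,B,C ::= \mathbf{1}\mid A\xrightarrow{C}B\mid\mathsf{ActorRef}(A)$; values $V ::= \alpha\mid\lambda x.M\mid()$; computations $M ::= V\,W\mid\mathbf{let}\ x\Leftarrow M\ \mathbf{in}\ N\mid\mathbf{return}\ V\mid\mathbf{spawn}\ M\mid\mathbf{send}\ V\ W\mid\mathbf{receive}\mid\mathbf{self}$ with typing $\Gamma\mid C\vdash M:A$ ($C$ the mailbox type; standard rules, with $\Gamma\mid A\vdash\mathbf{receive}:A$, $\Gamma\mid A\vdash\mathbf{self}:\mathsf{ActorRef}(A)$, $\mathbf{spawn}\ M:\mathsf{ActorRef}(A)$ if $\Gamma\mid A\vdash M:\mathbf 1$, $\mathbf{send}\ V\ W:\mathbf 1$ if $V:A$, $W:\mathsf{ActorRef}(A)$, and $\lambda x.M:A\xrightarrow{C}B$ if $\Gamma,x:A\mid C\vdash M:B$). Configurations $\mathcal{C}::=\mathcal{C}\parallel\mathcal{D}\mid(\nu a)\mathcal{C}\mid\langle a,M,\vec V\rangle$ (actor $a$ evaluating $M$ with mailbox $\vec V$), typed by $\Gamma;\Delta\vdash\mathcal{C}$: (Par) disjoint split of the linear $\Delta$; (Pid) $\Gamma,a:\mathsf{ActorRef}(A);\Delta,a:A\vdash\mathcal{C}$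 gives $\Gamma;\Delta\vdash(\nu a)\mathcal{C}$; (Actor) $\Gamma,a:\mathsf{ActorRef}(A)\mid A\vdash M:\mathbf 1$ and $\Gamma,a:\mathsf{ActorRef}(A)\vdash V_i:A$ for all $i$ give $\Gamma,a:\mathsf{ActorRef}(A);a:A\vdash\langle a,M,\vec V\rangle$. $\lambda_{\mathrm{ch}}$: computations $V\,W\mid\mathbf{let}\ x\Leftarrow M\ \mathbf{in}\ N\mid\mathbf{return}\ V\mid\mathbf{fork}\ M\mid\mathbf{give}\ V\ W\mid\mathbf{take}\ V\mid\mathbf{newCh}$; configurations $\mathcal{C}\parallel\mathcal{D}\mid(\nu a)\mathcal{C}\mid a(\vec V)\mid M$ ($a(\vec V)$ a buffer). In both calculi, with configuration contexts $G ::= [\,]\mid G\parallel\mathcal{C}\mid(\nu a)G$, structural congruence $\equiv$ is the least congruence closed under $G[-]$ with $\mathcal{C}\parallel\mathcal{D}\equiv\mathcal{D}\parallel\mathcal{C}$, $\mathcal{C}\parallel(\mathcal{D}\parallel\mathcal{E})\equiv(\mathcal{C}\parallel\mathcal{D})\parallel\mathcal{E}$, and $\mathcal{C}\parallel(\nu a)\mathcal{D}\equiv(\nu a)(\mathcal{C}\parallel\mathcal{D})$ if $a\notin\mathsf{fv}(\mathcal{C})$. Translation $[\![-]\!]$ from $\lambda_{\mathrm{act}}$ to $\lambda_{\mathrm{ch}}$: values $[\![x]\!]=x$, $[\![a]\!]=a$, $[\![()]\!]=()$, $[\![\lambda x.M]\!]=\lambda x.\lambda ch.([\![M]\!]ch)$;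 computations parameterised by a channel $ch$: $[\![\mathbf{let}\ x\Leftarrow M\ \mathbf{in}\ N]\!]ch=\mathbf{let}\ x\Leftarrow[\![M]\!]ch\ \mathbf{in}\ [\![N]\!]ch$, $[\![V\,W]\!]ch=\mathbf{let}\ f\Leftarrow([\![V]\!]\,[\![W]\!])\ \mathbf{in}\ f\,ch$, $[\![\mathbf{return}\ V]\!]ch=\mathbf{return}\ [\![V]\!]$, $[\![\mathbf{self}]\!]ch=\mathbf{return}\ ch$, $[\![\mathbf{receive}]\!]ch=\mathbf{take}\ ch$, $[\![\mathbf{spawn}\ M]\!]ch=\mathbf{let}\ chMb\Leftarrow\mathbf{newCh}\ \mathbf{in}\ \mathbf{let}\ y\Leftarrow\mathbf{fork}([\![M]\!]chMb)\ \mathbf{in}\ \mathbf{return}\ chMb$, $[\![\mathbf{send}\ V\ W]\!]ch=\mathbf{give}\ [\![V]\!]\ [\![W]\!]$; configurations $[\![\mathcal{C}_1\parallel\mathcal{C}_2]\!]=[\![\mathcal{C}_1]\!]\parallel[\![\mathcal{C}_2]\!]$, $[\![(\nu a)\mathcal{C}]\!]=(\nu a)[\![\mathcal{C}]\!]$, $[\![\langle a,M,\vec V\rangle]\!]=a([\![\vec V]\!])\parallel([\![M]\!]a)$ (values translated pointwise). *)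

theory Defs
  imports Main
begin

type_synonym var = nat
type_synonym name = nat  (* runtime names a (actor names / channel names) *)

datatype ty =
    TUnit
  | TFun ty ty ty             (* TFun A C B  =  A --C--> B *)
  | ActorRef ty

datatype aval =
    AVar var
  | AName name
  | ALam var acomp
  | AUnitV
and acomp =
    AApp aval aval
  | ALet var acomp acomp
  | AReturn aval
  | ASpawn acomp
  | ASend aval aval
  | AReceive
  | ASelf

datatype aconf =
    APar aconf aconf
  | ANu name aconf
  | AActor name acomp "aval list"

fun fn_aval :: "aval \<Rightarrow> name set" and fn_acomp :: "acomp \<Rightarrow> name set" where
  "fn_aval (AVar x) = {}"
| "fn_aval (AName a) = {a}"
| "fn_aval (ALam x M) = fn_acomp M"
| "fn_aval AUnitV = {}"
| "fn_acomp (AApp V W) = fn_aval V \<union> fn_aval W"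
| "fn_acomp (ALet x M N) = fn_acomp M \<union> fn_acomp N"
| "fn_acomp (AReturn V) = fn_aval V"
| "fn_acomp (ASpawn M) = fn_acomp M"
| "fn_acomp (ASend V W) = fn_aval V \<union> fn_aval W"
| "fn_acomp AReceive = {}"
| "fn_acomp ASelf = {}"

fun fn_aconf :: "aconf \<Rightarrow> name set" where
  "fn_aconf (APar C D) = fn_aconf C \<union> fn_aconf D"
| "fn_aconf (ANu a C) = fn_aconf C - {a}"
| "fn_aconf (AActor a M Vs) = {a} \<union> fn_acomp M \<union> \<Union> (fn_aval ` set Vs)"

datatype ident = IVar var | IName name

type_synonym tenv = "ident \<Rightarrow> ty option"
type_synonym lenv = "name \<Rightarrow> ty option"

inductive
  aval_ty :: "tenv \<Rightarrow> aval \<Rightarrow> ty \<Rightarrow> bool" and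
  acomp_ty :: "tenv \<Rightarrow> ty \<Rightarrow> acomp \<Rightarrow> ty \<Rightarrow> bool"
where
  T_Var: "\<Gamma> (IVar x) = Some A \<Longrightarrow> aval_ty \<Gamma> (AVar x) A"
| T_Name: "\<Gamma> (IName a) = Some A \<Longrightarrow> aval_ty \<Gamma> (AName a) A"
| T_Unit: "aval_ty \<Gamma> AUnitV TUnit"
| T_Lam: "acomp_ty (\<Gamma>(IVar x \<mapsto> A)) C M B \<Longrightarrow> aval_ty \<Gamma> (ALam x M) (TFun A C B)"
| T_App: "\<lbrakk> aval_ty \<Gamma> V (TFun A C B); aval_ty \<Gamma> W A \<rbrakk> \<Longrightarrow> acomp_ty \<Gamma> C (AApp V W) B"
| T_Let: "\<lbrakk> acomp_ty \<Gamma> C M A; acomp_ty (\<Gamma>(IVar x \<mapsto> A)) C N B \<rbrakk>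
          \<Longrightarrow> acomp_ty \<Gamma> C (ALet x M N) B"
| T_Return: "aval_ty \<Gamma> V A \<Longrightarrow> acomp_ty \<Gamma> C (AReturn V) A"
| T_Spawn: "acomp_ty \<Gamma> A M TUnit \<Longrightarrow> acomp_ty \<Gamma> C (ASpawn M) (ActorRef A)"
| T_Send: "\<lbrakk> aval_ty \<Gamma> V A; aval_ty \<Gamma> W (ActorRef A) \<rbrakk> \<Longrightarrow> acomp_ty \<Gamma> C (ASend V W) TUnit"
| T_Receive: "acomp_ty \<Gamma> A AReceive A"
| T_Self: "acomp_ty \<Gamma> A ASelf (ActorRef A)"

inductive aconf_ty :: "tenv \<Rightarrow> lenv \<Rightarrow> aconf \<Rightarrow> bool" where
  T_Par: "\<lbrakk> aconf_ty \<Gamma> \<Delta>1 C; aconf_ty \<Gamma> \<Delta>2 D; dom \<Delta>1 \<inter> dom \<Delta>2 = {} \<rbrakk>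
          \<Longrightarrow> aconf_ty \<Gamma> (\<Delta>1 ++ \<Delta>2) (APar C D)"
| T_Pid: "\<lbrakk> IName a \<notin> dom \<Gamma>; a \<notin> dom \<Delta>;
            aconf_ty (\<Gamma>(IName a \<mapsto> ActorRef A)) (\<Delta>(a \<mapsto> A)) C \<rbrakk>
          \<Longrightarrow> aconf_ty \<Gamma> \<Delta> (ANu a C)"
| T_Actor: "\<lbrakk> \<Gamma> (IName a) = Some (ActorRef A); acomp_ty \<Gamma> A M TUnit;
              \<forall>V \<in> set Vs. aval_ty \<Gamma> V A \<rbrakk>
          \<Longrightarrow> aconf_ty \<Gamma> [a \<mapsto> A] (AActor a M Vs)"

inductive ascong :: "aconf \<Rightarrow> aconf \<Rightarrow> bool" where
  AS_refl: "ascong C C"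
| AS_sym: "ascong C D \<Longrightarrow> ascong D C"
| AS_trans: "\<lbrakk> ascong C D; ascong D E \<rbrakk> \<Longrightarrow> ascong C E"
| AS_ctx_par: "ascong C D \<Longrightarrow> ascong (APar C E) (APar D E)"
| AS_ctx_nu: "ascong C D \<Longrightarrow> ascong (ANu a C) (ANu a D)"
| AS_comm: "ascong (APar C D) (APar D C)"
| AS_assoc: "ascong (APar C (APar D E)) (APar (APar C D) E)"
| AS_extr: "a \<notin> fn_aconf C \<Longrightarrow> ascong (APar C (ANu a D)) (ANu a (APar C D))"

text \<open>Target variables: translated source variables, plus the distinguished
  variables ch, f, y, chMb introduced by the translation (fresh by construction).\<close>
datatype tvar = SrcV var | ChV | FV | YV | ChMbV

datatype cval =
    CVar tvar
  | CName name
  | CLam tvar ccomp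
  | CUnitV
and ccomp =
    CApp cval cval
  | CLet tvar ccomp ccomp
  | CReturn cval
  | CFork ccomp
  | CGive cval cval
  | CTake cval
  | CNewCh

datatype cconf =
    CPar cconf cconf
  | CNu name cconf
  | CBuf name "cval list"
  | CThread ccomp

fun fn_cval :: "cval \<Rightarrow> name set" and fn_ccomp :: "ccomp \<Rightarrow> name set" where
  "fn_cval (CVar x) = {}"
| "fn_cval (CName a) = {a}"
| "fn_cval (CLam x M) = fn_ccomp M"
| "fn_cval CUnitV = {}"
| "fn_ccomp (CApp V W) = fn_cval V \<union> fn_cval W"
| "fn_ccomp (CLet x M N) = fn_ccomp M \<union> fn_ccomp N"
| "fn_ccomp (CReturn V) = fn_cval V"
| "fn_ccomp (CFork M) = fn_ccomp M"
| "fn_ccomp (CGive V W) = fn_cval V \<union> fn_cval W"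
| "fn_ccomp (CTake V) = fn_cval V"
| "fn_ccomp CNewCh = {}"

fun fn_cconf :: "cconf \<Rightarrow> name set" where
  "fn_cconf (CPar C D) = fn_cconf C \<union> fn_cconf D"
| "fn_cconf (CNu a C) = fn_cconf C - {a}"
| "fn_cconf (CBuf a Vs) = {a} \<union> \<Union> (fn_cval ` set Vs)"
| "fn_cconf (CThread M) = fn_ccomp M"

inductive cscong :: "cconf \<Rightarrow> cconf \<Rightarrow> bool" where
  CS_refl: "cscong C C"
| CS_sym: "cscong C D \<Longrightarrow> cscong D C"
| CS_trans: "\<lbrakk> cscong C D; cscong D E \<rbrakk> \<Longrightarrow> cscong C E"
| CS_ctx_par: "cscong C D \<Longrightarrow> cscong (CPar C E) (CPar D E)"
| CS_ctx_nu: "cscong C D \<Longrightarrow> cscong (CNu a C) (CNu a D)"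
| CS_comm: "cscong (CPar C D) (CPar D C)"
| CS_assoc: "cscong (CPar C (CPar D E)) (CPar (CPar C D) E)"
| CS_extr: "a \<notin> fn_cconf C \<Longrightarrow> cscong (CPar C (CNu a D)) (CNu a (CPar C D))"

fun tr_val :: "aval \<Rightarrow> cval" and tr_comp :: "acomp \<Rightarrow> cval \<Rightarrow> ccomp" where
  "tr_val (AVar x) = CVar (SrcV x)"
| "tr_val (AName a) = CName a"
| "tr_val AUnitV = CUnitV"
| "tr_val (ALam x M) = CLam (SrcV x) (CReturn (CLam ChV (tr_comp M (CVar ChV))))"
| "tr_comp (ALet x M N) ch = CLet (SrcV x) (tr_comp M ch) (tr_comp N ch)"
| "tr_comp (AApp V W) ch = CLet FV (CApp (tr_val V) (tr_val W)) (CApp (CVar FV) ch)"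
| "tr_comp (AReturn V) ch = CReturn (tr_val V)"
| "tr_comp ASelf ch = CReturn ch"
| "tr_comp AReceive ch = CTake ch"
| "tr_comp (ASpawn M) ch =
     CLet ChMbV CNewCh (CLet YV (CFork (tr_comp M (CVar ChMbV))) (CReturn (CVar ChMbV)))"
| "tr_comp (ASend V W) ch = CGive (tr_val V) (tr_val W)"

fun tr_conf :: "aconf \<Rightarrow> cconf" where
  "tr_conf (APar C D) = CPar (tr_conf C) (tr_conf D)"
| "tr_conf (ANu a C) = CNu a (tr_conf C)"
| "tr_conf (AActor a M Vs) = CPar (CBuf a (map tr_val Vs)) (CThread (tr_comp M (CName a)))"

end

theory Submission
  imports Defs
begin

text \<open>The translation is a homomorphism on parallel composition and restriction, so each
  rule of structural congruence maps to the same rule in the target. The only side condition,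
  freshness in scope extrusion, is preserved because the translation introduces no free names
  beyond those of its argument and the channel it is parameterised by.\<close>

lemma fn_tr_subset:
  "fn_cval (tr_val V) \<subseteq> fn_aval V"
  "fn_ccomp (tr_comp M ch) \<subseteq> fn_acomp M \<union> fn_cval ch"
  by (induction V and M arbitrary: and ch) (auto, fastforce+)

lemma fn_tr_conf_subset: "fn_cconf (tr_conf C) \<subseteq> fn_aconf C"
proof (induction C)
  case (AActor a M Vs)
  then show ?case using fn_tr_subset(1) fn_tr_subset(2)[of M "CName a"] by fastforce
qed auto

lemma cscong_tr_conf_if_ascong:
  assumes "ascong C D"
  shows "cscong (tr_conf C) (tr_conf D)"
  using assms
proof (induction rule: ascong.induct)
  case (AS_extr a C D)
  then have "a \<notin> fn_cconf (tr_conf C)"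
    using fn_tr_conf_subset by blast
  then show ?case by (simp add: cscong.CS_extr)
qed (auto intro: cscong.intros)

theorem lemma20:
  assumes "aconf_ty \<Gamma> \<Delta> C"
    and "ascong C D"
  shows "cscong (tr_conf C) (tr_conf D)"
  using assms(2) by (rule cscong_tr_conf_if_ascong)

end
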